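(* The SRT$_{\mathsf{A}}$-definable transformations are closed under union, intersection, and composition. That is: for any linear group $\mathbf{G}$ and finite label sets $\Sigma,\Gamma,\Theta$, (i) if $\mathcal{S}_1,\mathcal{S}_2$ are $(\Sigma,\Gamma,\mathbf{G})$-SRT$_{\mathsf{A}}$, then $[\![\mathcal{S}_1]\!]\cup[\![\mathcal{S}_2]\!]$ and $[\![\mathcal{S}_1]\!]\cap[\![\mathcal{S}_2]\!]$ are each equal to $[\![\mathcal{S}]\!]$ for some $(\Sigma,\Gamma,\mathbf{G})$-SRT$_{\mathsf{A}}$ $\mathcal{S}$; (ii) if $\mathcal{S}_1$ is a $(\Sigma,\Gamma,\mathbf{G})$-SRT$_{\mathsf{A}}$ and $\mathcal{S}_2$ a $(\Gamma,\Theta,\mathbf{G})$-SRT$_{\mathsf{A}}$, then $[\![\mathcal{S}_1]\!]\cdot[\![\mathcal{S}_2]\!]=[\![\mathcal{S}]\!]$ for some $(\Sigma,\Theta,\mathbf{G})$-SRT$_{\mathsf{A}}$ $\mathcal{S}$.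
   Context: A linear group is a triple $\mathbf{G}=(D,\leq,+)$ where $D$ is an infinite set, $\leq$ is a total order on $D$, and $(D,+)$ is a group with identity $0$. For finite label sets $\Sigma$ (input) and $\Gamma$ (output), a $(\Sigma,\Gamma,\mathbf{G})$-streaming register transducer (SRT) is a tuple $\mathcal{S}=(Q,q_0,k,R_0,\Delta)$ where $Q$ is a finite set of states, $q_0\in Q$, $k\in\mathbb{N}$ is the number of registers, $R_0\in D^k$ gives the initial register values, and $\Delta\subseteq Q\times\Sigma\times\{>,=,<\}^k\times\{\mathsf{old},\mathsf{new},\mathsf{add}\}^k\times\{1,\dots,k\}\times\Gamma\times Q$ is a finite set of transitions. A transition $(q,\sigma,l,m,u,\gamma,q')$ enables the step $(q,R)\xrightarrow[(\gamma,d')]{(\sigma,d)}(q',R')$ between configurations ($q\in Q$, $R\in D^k$) iff (1) for every $i$, $d>R[i]$, $d=R[i]$ or $d<R[i]$ according as $l[i]$ is $>$, $=$ or $<$; (2) for every $i$, $R'[i]=R[i]$ if $m[i]=\mathsf{old}$, $R'[i]=d$ if $m[i]=\mathsf{new}$, $R'[i]=R[i]+d$ if $m[i]=\mathsf{add}$; (3) $d'=R'[u]$. A run over a finite data word $s\in(\Sigma\times D)^*$ of length $n$ generating $t\in(\Gamma\times D)^*$ is a sequence of $n$ steps from $(q_0,R_0)$, the $i$-th reading $s[i]$ and emitting $t[i]$, each enabled by a transition of $\Delta$. $s\otimes t$ is the word with $i$-th letter $(s[i],t[i])$, and $[\![\mathcal{S}]\!]=\{s\otimes t:\text{there is a run over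 }s\text{ generating }t\}$. An SRT is add-free (an SRT$_{\mathsf{A}}$) if every transition has update vector in $\{\mathsf{old},\mathsf{new}\}^k$. Composition: for $\mathcal{T}_1$ over $(\Sigma\times D)\times(\Gamma\times D)$ and $\mathcal{T}_2$ over $(\Gamma\times D)\times(\Theta\times D)$, $\mathcal{T}_1\cdot\mathcal{T}_2$ is the set of $s_1\otimes s_2$ ($s_1\in(\Sigma\times D)^*$, $s_2\in(\Theta\times D)^*$) such that some $s_3\in(\Gamma\times D)^*$ has $s_1\otimes s_3\in\mathcal{T}_1$ and $s_3\otimes s_2\in\mathcal{T}_2$. *)

theory Defs
  imports Main
begin

text \<open>Linear group: a type 'd of class linorder (total order) and group_add (group with
identity 0, not necessarily commutative), with infinitely many elements (assumed in the theorem).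
Registers are indexed 0..k-1 (the paper uses 1..k).\<close>

datatype cmp = Gt | Eq | Lt
datatype upd = Old | New | Add

record ('a, 'b, 'd) srt =
  states :: "nat set"
  init   :: nat
  nregs  :: nat
  reg0   :: "'d list"
  trans  :: "(nat \<times> 'a \<times> cmp list \<times> upd list \<times> nat \<times> 'b \<times> nat) set"

definition wf_srt :: "('a, 'b, 'd) srt \<Rightarrow> bool" where
  "wf_srt S \<longleftrightarrow> finite (states S) \<and> init S \<in> states S \<and> length (reg0 S) = nregs S
     \<and> finite (trans S)
     \<and> (\<forall>(q, \<sigma>, l, m, u, \<gamma>, q') \<in> trans S. q \<in> states S \<and> q' \<in> states S
          \<and> length l = nregs S \<and> length m = nregs S \<and> u < nregs S)"

definition add_free :: "('a, 'b, 'd) srt \<Rightarrow> bool" where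
  "add_free S \<longleftrightarrow> (\<forall>(q, \<sigma>, l, m, u, \<gamma>, q') \<in> trans S. set m \<subseteq> {Old, New})"

definition srtA :: "('a, 'b, 'd) srt \<Rightarrow> bool" where
  "srtA S \<longleftrightarrow> wf_srt S \<and> add_free S"

fun cmp_ok :: "cmp \<Rightarrow> 'd::linorder \<Rightarrow> 'd \<Rightarrow> bool" where
  "cmp_ok Gt d r = (d > r)"
| "cmp_ok Eq d r = (d = r)"
| "cmp_ok Lt d r = (d < r)"

fun upd_val :: "upd \<Rightarrow> 'd::group_add \<Rightarrow> 'd \<Rightarrow> 'd" where
  "upd_val Old r d = r"
| "upd_val New r d = d"
| "upd_val Add r d = r + d"

definition step :: "('a, 'b, 'd::{linorder,group_add}) srt \<Rightarrow> nat \<times> 'd list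
     \<Rightarrow> 'a \<times> 'd \<Rightarrow> 'b \<times> 'd \<Rightarrow> nat \<times> 'd list \<Rightarrow> bool" where
  "step S c x y c' \<longleftrightarrow>
     (\<exists>l m u. (fst c, fst x, l, m, u, fst y, fst c') \<in> trans S
        \<and> (\<forall>i < nregs S. cmp_ok (l ! i) (snd x) (snd c ! i))
        \<and> length (snd c') = nregs S
        \<and> (\<forall>i < nregs S. snd c' ! i = upd_val (m ! i) (snd c ! i) (snd x))
        \<and> snd y = snd c' ! u)"

inductive run :: "('a, 'b, 'd::{linorder,group_add}) srt \<Rightarrow> nat \<times> 'd list
     \<Rightarrow> ('a \<times> 'd) list \<Rightarrow> ('b \<times> 'd) list \<Rightarrow> nat \<times> 'd list \<Rightarrow> bool"
  for S where
  run_nil: "run S c [] [] c"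
| run_cons: "step S c x y c'' \<Longrightarrow> run S c'' xs ys c' \<Longrightarrow> run S c (x # xs) (y # ys) c'"

definition sem :: "('a, 'b, 'd::{linorder,group_add}) srt \<Rightarrow> (('a \<times> 'd) \<times> ('b \<times> 'd)) list set" where
  "sem S = {zip s t | s t. length s = length t \<and> (\<exists>c'. run S (init S, reg0 S) s t c')}"

definition comp_tr :: "(('a \<times> 'd) \<times> ('b \<times> 'd)) list set \<Rightarrow> (('b \<times> 'd) \<times> ('c \<times> 'd)) list set
     \<Rightarrow> (('a \<times> 'd) \<times> ('c \<times> 'd)) list set" where
  "comp_tr T1 T2 = {zip s1 s2 | s1 s2. length s1 = length s2 \<and>
     (\<exists>s3. length s3 = length s1 \<and> zip s1 s3 \<in> T1 \<and> zip s3 s2 \<in> T2)}"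

end

theory Submission
  imports Defs "HOL-Library.Countable"
begin

text \<open>
  Union: a fresh initial state guesses with its first move which of the two transducers to
  simulate, each of them working on its own block of registers.

  Intersection and composition are instances of one synchronous product running both transducers
  in lockstep; under composition the second one reads the datum written by the first. That datum
  may be an old register value of the first transducer, which an add-free transducer cannot copy
  into a register of its own. So the product keeps a pool of \<open>k1 + k2 + 1\<close> registers and
  stores in its finite control, for every register of the two components, a pointer into the pool,
  together with the order type of the pool. Each input datum is written to a slot no pointer uses,
  a register that is to receive the datum read by the second component is pointed at the slot
  holding it, and every comparison a component makes is read off the order type.
\<close>

text \<open>Finiteness also makes \<^typ>\<open>cmp\<close> countable, as the state encodings via \<^const>\<open>to_nat\<close> need.\<close>

instance cmp :: finite
proof
  have "UNIV = {Gt, Eq, Lt}" by (auto intro: cmp.exhaust)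
  then show "finite (UNIV :: cmp set)" by (metis finite.emptyI finite.insertI)
qed

section \<open>Steps and runs of add-free transducers\<close>

definition cmp_of :: "'d::linorder \<Rightarrow> 'd \<Rightarrow> cmp" where
  "cmp_of x y = (if y < x then Gt else if x = y then Eq else Lt)"

lemma cmp_ok_iff: "cmp_ok c x y \<longleftrightarrow> c = cmp_of x y"
  by (cases c) (auto simp: cmp_of_def)

lemma cmp_of_refl [simp]: "cmp_of x x = Eq"
  by (simp add: cmp_of_def)

lemma cmp_of_eq_Eq_iff [simp]: "cmp_of x y = Eq \<longleftrightarrow> x = y"
  by (auto simp: cmp_of_def)

fun flip_cmp :: "cmp \<Rightarrow> cmp" where
  "flip_cmp Gt = Lt" | "flip_cmp Eq = Eq" | "flip_cmp Lt = Gt"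

lemma cmp_of_swap: "cmp_of y x = flip_cmp (cmp_of x y)"
  by (auto simp: cmp_of_def)

definition upd_regs :: "upd list \<Rightarrow> 'd::group_add list \<Rightarrow> 'd \<Rightarrow> 'd list" where
  "upd_regs m R d = map2 (\<lambda>x r. upd_val x r d) m R"

lemma length_upd_regs [simp]: "length m = length R \<Longrightarrow> length (upd_regs m R d) = length R"
  by (simp add: upd_regs_def)

lemma nth_upd_regs [simp]:
  "length m = length R \<Longrightarrow> i < length R \<Longrightarrow> upd_regs m R d ! i = upd_val (m ! i) (R ! i) d"
  by (simp add: upd_regs_def)

lemma upd_regs_append:
  "length m = length R \<Longrightarrow> upd_regs (m @ m') (R @ R') d = upd_regs m R d @ upd_regs m' R' d"
  by (simp add: upd_regs_def)

lemma upd_regs_Old [simp]: "length R = k \<Longrightarrow> upd_regs (replicate k Old) R d = R"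
  by (induction R arbitrary: k) (auto simp: upd_regs_def)

lemma srtA_transD:
  assumes "srtA S" "(q, \<sigma>, l, m, u, \<gamma>, q') \<in> trans S"
  shows "length l = nregs S" "length m = nregs S" "u < nregs S" "set m \<subseteq> {Old, New}"
  using assms by (auto simp: srtA_def wf_srt_def add_free_def)

lemma srtA_length_reg0: "srtA S \<Longrightarrow> length (reg0 S) = nregs S"
  by (simp add: srtA_def wf_srt_def)

lemma step_srtA_iff:
  assumes "srtA S" "length R = nregs S"
  shows "step S (q, R) (\<sigma>, d) (\<gamma>, e) (q', R') \<longleftrightarrow>
    (\<exists>m u. (q, \<sigma>, map (cmp_of d) R, m, u, \<gamma>, q') \<in> trans S \<and> R' = upd_regs m R d \<and> e = R' ! u)"
proof
  assume "step S (q, R) (\<sigma>, d) (\<gamma>, e) (q', R')"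
  then obtain l m u where t: "(q, \<sigma>, l, m, u, \<gamma>, q') \<in> trans S"
    and l: "\<forall>i < nregs S. l ! i = cmp_of d (R ! i)" and R': "length R' = nregs S"
      "\<forall>i < nregs S. R' ! i = upd_val (m ! i) (R ! i) d" and e: "e = R' ! u"
    by (auto simp: step_def cmp_ok_iff)
  note wf = srtA_transD[OF assms(1) t]
  have "l = map (cmp_of d) R" using l wf assms(2) by (simp add: nth_equalityI)
  moreover have "R' = upd_regs m R d" using R' wf assms(2) by (simp add: nth_equalityI)
  ultimately show "\<exists>m u. (q, \<sigma>, map (cmp_of d) R, m, u, \<gamma>, q') \<in> trans S \<and> R' = upd_regs m R d
      \<and> e = R' ! u"
    using t e by blast
next
  assume "\<exists>m u. (q, \<sigma>, map (cmp_of d) R, m, u, \<gamma>, q') \<in> trans S \<and> R' = upd_regs m R d \<and> e = R' ! u"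
  then obtain m u where t: "(q, \<sigma>, map (cmp_of d) R, m, u, \<gamma>, q') \<in> trans S"
    and R': "R' = upd_regs m R d" and e: "e = R' ! u" by blast
  note wf = srtA_transD[OF assms(1) t]
  show "step S (q, R) (\<sigma>, d) (\<gamma>, e) (q', R')"
    unfolding step_def using t R' e wf assms(2)
    by (intro exI[of _ "map (cmp_of d) R"] exI[of _ m] exI[of _ u]) (simp add: cmp_ok_iff)
qed

lemma step_length_regs: "step S c x y c' \<Longrightarrow> length (snd c') = nregs S"
  by (auto simp: step_def)

definition runs :: "('a, 'b, 'd::{linorder,group_add}) srt \<Rightarrow> nat \<times> 'd list
     \<Rightarrow> ('a \<times> 'd) list \<Rightarrow> ('b \<times> 'd) list \<Rightarrow> bool" where
  "runs S c s t \<longleftrightarrow> (\<exists>c'. run S c s t c')"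

lemma runs_Nil [simp]: "runs S c [] t \<longleftrightarrow> t = []"
proof
  show "runs S c [] t \<Longrightarrow> t = []" unfolding runs_def by (auto elim: run.cases)
  show "t = [] \<Longrightarrow> runs S c [] t" unfolding runs_def using run_nil by blast
qed

lemma runs_Cons: "runs S c (x # s) t \<longleftrightarrow> (\<exists>y t' c'. t = y # t' \<and> step S c x y c' \<and> runs S c' s t')"
proof
  assume "runs S c (x # s) t"
  then obtain c' where "run S c (x # s) t c'" by (auto simp: runs_def)
  then show "\<exists>y t' c'. t = y # t' \<and> step S c x y c' \<and> runs S c' s t'"
    by (cases rule: run.cases) (auto simp: runs_def simp del: split_paired_Ex)
next
  assume "\<exists>y t' c'. t = y # t' \<and> step S c x y c' \<and> runs S c' s t'"
  then show "runs S c (x # s) t" by (auto simp: runs_def intro: run_cons)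
qed

lemma runs_length: "runs S c s t \<Longrightarrow> length s = length t"
  by (induction s arbitrary: c t) (auto simp: runs_Cons)

lemma mem_sem_iff: "w \<in> sem S \<longleftrightarrow> runs S (init S, reg0 S) (map fst w) (map snd w)"
proof
  assume "w \<in> sem S"
  then obtain s t where "w = zip s t" "length s = length t" "runs S (init S, reg0 S) s t"
    unfolding sem_def runs_def by blast
  then show "runs S (init S, reg0 S) (map fst w) (map snd w)" by simp
next
  assume "runs S (init S, reg0 S) (map fst w) (map snd w)"
  then show "w \<in> sem S"
    unfolding sem_def runs_def by (auto simp: zip_map_fst_snd intro!: exI[of _ "map fst w"]
        exI[of _ "map snd w"])
qed

lemma mem_comp_tr_sem_iff:
  "w \<in> comp_tr (sem S1) (sem S2) \<longleftrightarrow>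
    (\<exists>u. runs S1 (init S1, reg0 S1) (map fst w) u \<and> runs S2 (init S2, reg0 S2) u (map snd w))"
proof
  assume "w \<in> comp_tr (sem S1) (sem S2)"
  then obtain s1 s2 s3 where "w = zip s1 s2" "length s1 = length s2" "length s3 = length s1"
    "zip s1 s3 \<in> sem S1" "zip s3 s2 \<in> sem S2"
    unfolding comp_tr_def by blast
  then show "\<exists>u. runs S1 (init S1, reg0 S1) (map fst w) u
      \<and> runs S2 (init S2, reg0 S2) u (map snd w)"
    by (auto simp: mem_sem_iff)
next
  assume "\<exists>u. runs S1 (init S1, reg0 S1) (map fst w) u \<and> runs S2 (init S2, reg0 S2) u (map snd w)"
  then obtain u where u: "runs S1 (init S1, reg0 S1) (map fst w) u"
      "runs S2 (init S2, reg0 S2) u (map snd w)"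
    by blast
  then have "length u = length w" by (metis length_map runs_length)
  with u show "w \<in> comp_tr (sem S1) (sem S2)"
    unfolding comp_tr_def
    by (intro CollectI exI[of _ "map fst w"] exI[of _ "map snd w"] conjI exI[of _ u])
      (simp_all add: mem_sem_iff zip_map_fst_snd)
qed

definition cmp_lists :: "nat \<Rightarrow> cmp list set" where
  "cmp_lists K = {l. length l = K}"

lemma finite_cmp_lists: "finite (cmp_lists K)"
  using finite_lists_length_eq[of "UNIV :: cmp set" K] by (simp add: cmp_lists_def)

definition mk_srt :: "nat \<Rightarrow> nat \<Rightarrow> 'd list \<Rightarrow> (nat \<times> 'a \<times> cmp list \<times> upd list \<times> nat \<times> 'b \<times> nat) set
    \<Rightarrow> ('a, 'b, 'd) srt" where
  "mk_srt q0 k R0 T = \<lparr>states = insert q0 (fst ` T \<union> (\<lambda>(q, \<sigma>, l, m, u, \<gamma>, q'). q') ` T),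
     init = q0, nregs = k, reg0 = R0, trans = T\<rparr>"

lemma mk_srt_simps [simp]:
  "init (mk_srt q0 k R0 T) = q0" "nregs (mk_srt q0 k R0 T) = k"
  "reg0 (mk_srt q0 k R0 T) = R0" "trans (mk_srt q0 k R0 T) = T"
  by (simp_all add: mk_srt_def)

lemma srtA_mk_srt:
  assumes "finite T" "length R0 = k"
    and "\<And>q \<sigma> l m u \<gamma> q'. (q, \<sigma>, l, m, u, \<gamma>, q') \<in> T \<Longrightarrow>
      length l = k \<and> length m = k \<and> u < k \<and> set m \<subseteq> {Old, New}"
  shows "srtA (mk_srt q0 k R0 T)"
  using assms unfolding srtA_def wf_srt_def add_free_def mk_srt_def
  by (fastforce simp: image_iff)

section \<open>Union\<close>

definition tag :: "nat \<Rightarrow> nat \<Rightarrow> nat" where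
  "tag b q = to_nat (b, q)"

lemma tag_eq_iff [simp]: "tag b q = tag b' q' \<longleftrightarrow> b = b' \<and> q = q'"
  by (simp add: tag_def)

definition lift_trans :: "nat \<Rightarrow> nat \<Rightarrow> nat \<Rightarrow> (nat \<times> 'a \<times> cmp list \<times> upd list \<times> nat \<times> 'b \<times> nat) set
    \<Rightarrow> (nat \<times> 'a \<times> cmp list \<times> upd list \<times> nat \<times> 'b \<times> nat) set" where
  "lift_trans b k1 k2 T =
    {(tag b q, \<sigma>, l1 @ l @ l2, replicate k1 Old @ m @ replicate k2 Old, k1 + u, \<gamma>, tag b q')
      | q \<sigma> l m u \<gamma> q' l1 l2. (q, \<sigma>, l, m, u, \<gamma>, q') \<in> T \<and> length l1 = k1 \<and> length l2 = k2}"

lemma finite_lift_trans: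
  assumes "finite T"
  shows "finite (lift_trans b k1 k2 T)"
proof (rule finite_subset)
  show "lift_trans b k1 k2 T \<subseteq> (\<lambda>((q, \<sigma>, l, m, u, \<gamma>, q'), l1, l2).
      (tag b q, \<sigma>, l1 @ l @ l2, replicate k1 Old @ m @ replicate k2 Old, k1 + u, \<gamma>, tag b q'))
      ` (T \<times> cmp_lists k1 \<times> cmp_lists k2)"
    unfolding lift_trans_def cmp_lists_def by (auto simp: image_iff) force
  show "finite \<dots>" using assms finite_cmp_lists by blast
qed

lemma lift_trans_wf:
  assumes "srtA S" "(p, \<sigma>, l, m, u, \<gamma>, p') \<in> lift_trans b k1 k2 (trans S)"
  shows "length l = k1 + nregs S + k2 \<and> length m = k1 + nregs S + k2 \<and> u < k1 + nregs S + k2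
    \<and> set m \<subseteq> {Old, New}"
  using assms(2) srtA_transD[OF assms(1)] unfolding lift_trans_def by fastforce

lemma map_eq_append3_conv:
  assumes "map f (R1 @ R @ R2) = l1 @ l @ l2" "length l1 = length R1" "length l = length R"
  shows "l = map f R"
  using assms by (auto simp: append_eq_append_conv)

lemma mem_lift_trans_iff:
  assumes S: "srtA S" and R: "length R1 = k1" "length R = nregs S" "length R2 = k2"
  shows "(tag b q, \<sigma>, map (cmp_of d) (R1 @ R @ R2), m, u, \<gamma>, p) \<in> lift_trans b k1 k2 (trans S) \<longleftrightarrow>
    (\<exists>q' m' u'. (q, \<sigma>, map (cmp_of d) R, m', u', \<gamma>, q') \<in> trans S \<and> p = tag b q'
       \<and> m = replicate k1 Old @ m' @ replicate k2 Old \<and> u = k1 + u')"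
proof
  assume "(tag b q, \<sigma>, map (cmp_of d) (R1 @ R @ R2), m, u, \<gamma>, p) \<in> lift_trans b k1 k2 (trans S)"
  then obtain l m' u' q' l1 l2 where t: "(q, \<sigma>, l, m', u', \<gamma>, q') \<in> trans S"
    and "map (cmp_of d) (R1 @ R @ R2) = l1 @ l @ l2" "length l1 = k1" "length l2 = k2"
    and "m = replicate k1 Old @ m' @ replicate k2 Old" "u = k1 + u'" "p = tag b q'"
    unfolding lift_trans_def mem_Collect_eq prod.inject tag_eq_iff by blast
  moreover from this have "l = map (cmp_of d) R"
    using map_eq_append3_conv srtA_transD(1)[OF S t] R by metis
  ultimately show "\<exists>q' m' u'. (q, \<sigma>, map (cmp_of d) R, m', u', \<gamma>, q') \<in> trans S \<and> p = tag b q'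
       \<and> m = replicate k1 Old @ m' @ replicate k2 Old \<and> u = k1 + u'"
    by auto
next
  assume "\<exists>q' m' u'. (q, \<sigma>, map (cmp_of d) R, m', u', \<gamma>, q') \<in> trans S \<and> p = tag b q'
       \<and> m = replicate k1 Old @ m' @ replicate k2 Old \<and> u = k1 + u'"
  then show "(tag b q, \<sigma>, map (cmp_of d) (R1 @ R @ R2), m, u, \<gamma>, p) \<in> lift_trans b k1 k2 (trans S)"
    unfolding lift_trans_def mem_Collect_eq using R
    by fastforce
qed

lemma step_lift_iff:
  assumes S: "srtA S" and S': "srtA S'" "nregs S' = k1 + nregs S + k2"
    and T: "\<And>q r. (tag b q, r) \<in> trans S' \<longleftrightarrow> (tag b q, r) \<in> lift_trans b k1 k2 (trans S)"
    and R: "length R1 = k1" "length R = nregs S" "length R2 = k2"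
  shows "step S' (tag b q, R1 @ R @ R2) (\<sigma>, d) (\<gamma>, e) (p, R'') \<longleftrightarrow>
    (\<exists>q' R'. p = tag b q' \<and> R'' = R1 @ R' @ R2 \<and> step S (q, R) (\<sigma>, d) (\<gamma>, e) (q', R'))"
proof -
  have "step S' (tag b q, R1 @ R @ R2) (\<sigma>, d) (\<gamma>, e) (p, R'') \<longleftrightarrow>
    (\<exists>m u. (tag b q, \<sigma>, map (cmp_of d) (R1 @ R @ R2), m, u, \<gamma>, p) \<in> lift_trans b k1 k2 (trans S)
      \<and> R'' = upd_regs m (R1 @ R @ R2) d \<and> e = R'' ! u)"
    using step_srtA_iff[OF S'(1), of "R1 @ R @ R2"] R S'(2) by (simp add: T)
  also have "\<dots> \<longleftrightarrow> (\<exists>q' m u. (q, \<sigma>, map (cmp_of d) R, m, u, \<gamma>, q') \<in> trans S \<and> p = tag b q'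
       \<and> R'' = upd_regs (replicate k1 Old @ m @ replicate k2 Old) (R1 @ R @ R2) d
           \<and> e = R'' ! (k1 + u))"
    unfolding mem_lift_trans_iff[OF S R] by blast
  also have "\<dots> \<longleftrightarrow> (\<exists>q' m u. (q, \<sigma>, map (cmp_of d) R, m, u, \<gamma>, q') \<in> trans S \<and> p = tag b q'
       \<and> R'' = R1 @ upd_regs m R d @ R2 \<and> e = upd_regs m R d ! u)"
  proof (intro ex_cong1 conj_cong refl)
    fix m u q'
    assume "(q, \<sigma>, map (cmp_of d) R, m, u, \<gamma>, q') \<in> trans S"
    note wf = srtA_transD[OF S this]
    then show "R'' = upd_regs (replicate k1 Old @ m @ replicate k2 Old) (R1 @ R @ R2) d
        \<longleftrightarrow> R'' = R1 @ upd_regs m R d @ R2"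
      using R by (simp add: upd_regs_append)
    show "R'' = R1 @ upd_regs m R d @ R2 \<Longrightarrow> e = R'' ! (k1 + u) \<longleftrightarrow> e = upd_regs m R d ! u"
      using wf R by (simp add: nth_append)
  qed
  also have "\<dots> \<longleftrightarrow> (\<exists>q' R'. p = tag b q' \<and> R'' = R1 @ R' @ R2 \<and> step S (q, R) (\<sigma>, d) (\<gamma>, e) (q', R'))"
    using step_srtA_iff[OF S R(2)] by auto
  finally show ?thesis .
qed

lemma lift_trans_tag: "(tag c q, r) \<in> lift_trans b k1 k2 T \<Longrightarrow> c = b"
  by (auto simp: lift_trans_def)

lemma runs_lift_iff:
  assumes S: "srtA S" and S': "srtA S'" "nregs S' = k1 + nregs S + k2"
    and T: "\<And>q r. (tag b q, r) \<in> trans S' \<longleftrightarrow> (tag b q, r) \<in> lift_trans b k1 k2 (trans S)"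
    and R: "length R1 = k1" "length R2 = k2"
  shows "length R = nregs S \<Longrightarrow> runs S' (tag b q, R1 @ R @ R2) s t \<longleftrightarrow> runs S (q, R) s t"
proof (induction s arbitrary: q R t)
  case (Cons x s)
  obtain \<sigma> d where x: "x = (\<sigma>, d)" by fastforce
  have "runs S' (tag b q, R1 @ R @ R2) (x # s) t \<longleftrightarrow> (\<exists>\<gamma> e t' q' R'. t = (\<gamma>, e) # t'
      \<and> step S (q, R) (\<sigma>, d) (\<gamma>, e) (q', R') \<and> runs S' (tag b q', R1 @ R' @ R2) s t')"
    unfolding runs_Cons x split_paired_Ex step_lift_iff[OF S S' T R(1) Cons.prems R(2)] by blast
  also have "\<dots> \<longleftrightarrow> (\<exists>\<gamma> e t' q' R'. t = (\<gamma>, e) # t'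
      \<and> step S (q, R) (\<sigma>, d) (\<gamma>, e) (q', R') \<and> runs S (q', R') s t')"
    using Cons.IH step_length_regs by (intro ex_cong1 conj_cong refl) fastforce+
  also have "\<dots> \<longleftrightarrow> runs S (q, R) (x # s) t"
    unfolding runs_Cons x split_paired_Ex by blast
  finally show ?case .
qed simp

definition union_srt :: "('a, 'b, 'd) srt \<Rightarrow> ('a, 'b, 'd) srt \<Rightarrow> ('a, 'b, 'd) srt" where
  "union_srt S1 S2 =
    (let T1 = lift_trans 0 0 (nregs S2) (trans S1); T2 = lift_trans 1 (nregs S1) 0 (trans S2)
     in mk_srt (tag 2 0) (nregs S1 + nregs S2) (reg0 S1 @ reg0 S2)
          (T1 \<union> T2 \<union> Pair (tag 2 0) ` {r. (tag 0 (init S1), r) \<in> T1 \<or> (tag 1 (init S2), r) \<in> T2}))"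

lemma trans_union_srt_tag:
  "(tag 0 q, r) \<in> trans (union_srt S1 S2) \<longleftrightarrow> (tag 0 q, r) \<in> lift_trans 0 0 (nregs S2) (trans S1)"
  "(tag 1 q, r) \<in> trans (union_srt S1 S2) \<longleftrightarrow> (tag 1 q, r) \<in> lift_trans 1 (nregs S1) 0 (trans S2)"
  by (auto simp: union_srt_def Let_def dest: lift_trans_tag)

lemma step_union_start:
  "step (union_srt S1 S2) (tag 2 0, R) x y c' \<longleftrightarrow>
    step (union_srt S1 S2) (tag 0 (init S1), R) x y c'
        \<or> step (union_srt S1 S2) (tag 1 (init S2), R) x y c'"
proof -
  have start: "(tag 2 0, r) \<in> trans (union_srt S1 S2) \<longleftrightarrow>
      (tag 0 (init S1), r) \<in> trans (union_srt S1 S2)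
          \<or> (tag 1 (init S2), r) \<in> trans (union_srt S1 S2)" for r
    unfolding trans_union_srt_tag by (auto simp: union_srt_def Let_def dest: lift_trans_tag)
  show ?thesis unfolding step_def fst_conv snd_conv start by blast
qed

lemma srtA_union_srt:
  assumes S1: "srtA S1" and S2: "srtA S2"
  shows "srtA (union_srt S1 S2)"
proof -
  define T1 where "T1 = lift_trans 0 0 (nregs S2) (trans S1)"
  define T2 where "T2 = lift_trans 1 (nregs S1) 0 (trans S2)"
  have fin: "finite T1" "finite T2"
    using S1 S2 by (simp_all add: T1_def T2_def finite_lift_trans srtA_def wf_srt_def)
  have "{r. (tag 0 (init S1), r) \<in> T1 \<or> (tag 1 (init S2), r) \<in> T2} \<subseteq> snd ` (T1 \<union> T2)"
    by force
  then have "finite (Pair (tag 2 0) ` {r. (tag 0 (init S1), r) \<in> T1 \<or> (tag 1 (init S2), r) \<in> T2})"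
    using fin by (meson finite_UnI finite_imageI finite_subset)
  moreover have wf: "length l = nregs S1 + nregs S2 \<and> length m = nregs S1 + nregs S2
      \<and> u < nregs S1 + nregs S2 \<and> set m \<subseteq> {Old, New}" if "(p, \<sigma>, l, m, u, \<gamma>, p') \<in> T1 \<union> T2"
    for p \<sigma> l m u \<gamma> p'
    using that lift_trans_wf[OF S1] lift_trans_wf[OF S2] by (fastforce simp: T1_def T2_def)
  ultimately show ?thesis
    unfolding union_srt_def Let_def T1_def[symmetric] T2_def[symmetric]
  proof (intro srtA_mk_srt)
    fix p \<sigma> l m u \<gamma> p'
    assume "(p, \<sigma>, l, m, u, \<gamma>, p') \<in> T1 \<union> T2 \<union>
      Pair (tag 2 0) ` {r. (tag 0 (init S1), r) \<in> T1 \<or> (tag 1 (init S2), r) \<in> T2}"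
    then obtain p0 where "(p0, \<sigma>, l, m, u, \<gamma>, p') \<in> T1 \<union> T2" by blast
    then show "length l = nregs S1 + nregs S2 \<and> length m = nregs S1 + nregs S2
      \<and> u < nregs S1 + nregs S2 \<and> set m \<subseteq> {Old, New}" by (rule wf)
  qed (use fin S1 S2 in \<open>auto simp: srtA_length_reg0\<close>)
qed

lemma runs_union_srt_iff:
  assumes S1: "srtA S1" and S2: "srtA S2"
  shows "runs (union_srt S1 S2) (init (union_srt S1 S2), reg0 (union_srt S1 S2)) s t \<longleftrightarrow>
    runs S1 (init S1, reg0 S1) s t \<or> runs S2 (init S2, reg0 S2) s t"
proof -
  let ?U = "union_srt S1 S2" and ?R = "reg0 S1 @ reg0 S2"
  have U: "srtA ?U" "nregs ?U = nregs S1 + nregs S2" "init ?U = tag 2 0" "reg0 ?U = ?R"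
    using srtA_union_srt[OF S1 S2] by (simp_all add: union_srt_def Let_def)
  have "runs ?U (tag 2 0, ?R) s t \<longleftrightarrow> runs ?U (tag 0 (init S1), ?R) s t
      \<or> runs ?U (tag 1 (init S2), ?R) s t"
  proof (cases s)
    case (Cons x s')
    then show ?thesis by (simp only: runs_Cons step_union_start) blast
  qed simp
  moreover have "runs ?U (tag 0 (init S1), [] @ reg0 S1 @ reg0 S2) s t
      \<longleftrightarrow> runs S1 (init S1, reg0 S1) s t"
    using U S2 by (intro runs_lift_iff[OF S1 U(1) _ trans_union_srt_tag(1)])
        (simp_all add: srtA_length_reg0 S1)
  moreover have "runs ?U (tag 1 (init S2), reg0 S1 @ reg0 S2 @ []) s t
      \<longleftrightarrow> runs S2 (init S2, reg0 S2) s t"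
    using U S1 by (intro runs_lift_iff[OF S2 U(1) _ trans_union_srt_tag(2)])
        (simp_all add: srtA_length_reg0 S2)
  ultimately show ?thesis using U by simp
qed

section \<open>Registers as pointers into a pool\<close>

definition cmp_matrices :: "nat \<Rightarrow> cmp list list set" where
  "cmp_matrices K = {Om. set Om \<subseteq> cmp_lists K \<and> length Om = K}"

definition index_lists :: "nat \<Rightarrow> nat \<Rightarrow> nat list set" where
  "index_lists k K = {P. set P \<subseteq> {..<K} \<and> length P = k}"

lemma finite_cmp_matrices: "finite (cmp_matrices K)"
  unfolding cmp_matrices_def by (rule finite_lists_length_eq[OF finite_cmp_lists])

lemma finite_index_lists: "finite (index_lists k K)"
  unfolding index_lists_def by (rule finite_lists_length_eq) simp

lemma index_lists_nth_less: "P \<in> index_lists k K \<Longrightarrow> i < k \<Longrightarrow> P ! i < K"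
  unfolding index_lists_def using nth_mem by fastforce

lemma index_lists_length: "P \<in> index_lists k K \<Longrightarrow> length P = k"
  by (simp add: index_lists_def)

definition order_matrix :: "'d::linorder list \<Rightarrow> cmp list list" where
  "order_matrix R = map (\<lambda>x. map (cmp_of x) R) R"

lemma order_matrix_in_cmp_matrices: "order_matrix R \<in> cmp_matrices (length R)"
  by (auto simp: order_matrix_def cmp_matrices_def cmp_lists_def)

lemma nth_order_matrix [simp]:
  "a < length R \<Longrightarrow> b < length R \<Longrightarrow> order_matrix R ! a ! b = cmp_of (R ! a) (R ! b)"
  by (simp add: order_matrix_def)

lemma map_nth_order_matrix:
  "b < length R \<Longrightarrow> set P \<subseteq> {..<length R} \<Longrightarrow>
    map ((!) (order_matrix R ! b)) P = map (cmp_of (R ! b)) (map ((!) R) P)"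
  by (auto simp: order_matrix_def)

definition order_update :: "cmp list \<Rightarrow> cmp list list \<Rightarrow> nat \<Rightarrow> cmp list list" where
  "order_update l Om f = map (\<lambda>a. map (\<lambda>b.
      if a = f then if b = f then Eq else l ! b
      else if b = f then flip_cmp (l ! a) else Om ! a ! b) [0..<length l]) [0..<length l]"

lemma order_update_order_matrix:
  "f < length R \<Longrightarrow> order_update (map (cmp_of d) R) (order_matrix R) f = order_matrix (R[f := d])"
  by (auto simp: order_update_def order_matrix_def nth_list_update cmp_of_swap[of "R ! _" d]
      intro!: nth_equalityI)

definition upd_ptrs :: "upd list \<Rightarrow> nat list \<Rightarrow> nat \<Rightarrow> nat list" where
  "upd_ptrs m P a = map2 (\<lambda>x p. if x = New then a else p) m P"

lemma upd_ptrs_in_index_lists: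
  "P \<in> index_lists k K \<Longrightarrow> length m = k \<Longrightarrow> a < K \<Longrightarrow> upd_ptrs m P a \<in> index_lists k K"
  by (auto simp: upd_ptrs_def index_lists_def dest: set_zip_rightD)

lemma upd_ptrs_nth_less:
  "P \<in> index_lists k K \<Longrightarrow> length m = k \<Longrightarrow> a < K \<Longrightarrow> i < k \<Longrightarrow> upd_ptrs m P a ! i < K"
  using upd_ptrs_in_index_lists index_lists_nth_less by blast

lemma map_nth_upd_ptrs:
  assumes "set m \<subseteq> {Old, New}" "length m = length P" "\<forall>p \<in> set P. R' ! p = R ! p"
  shows "map ((!) R') (upd_ptrs m P a) = upd_regs m (map ((!) R) P) (R' ! a)"
proof (rule nth_equalityI)
  fix i assume "i < length (map ((!) R') (upd_ptrs m P a))"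
  then have i: "i < length P" using assms(2) by (simp add: upd_ptrs_def)
  moreover have "m ! i \<in> {Old, New}" using assms(1,2) i by (metis nth_mem subsetD)
  ultimately show "map ((!) R') (upd_ptrs m P a) ! i = upd_regs m (map ((!) R) P) (R' ! a) ! i"
    using assms(2,3) by (auto simp: upd_ptrs_def)
qed (simp add: upd_ptrs_def assms(2))

lemma step_pointers_iff:
  assumes S: "srtA S" and P: "P \<in> index_lists (nregs S) (length R')" and a: "a < length R'"
    and unchanged: "\<forall>p \<in> set P. R' ! p = R ! p"
  shows "step S (q, map ((!) R) P) (\<sigma>, R' ! a) (\<gamma>, e) (q', R1') \<longleftrightarrow>
    (\<exists>m u. (q, \<sigma>, map ((!) (order_matrix R' ! a)) P, m, u, \<gamma>, q') \<in> trans S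
       \<and> R1' = map ((!) R') (upd_ptrs m P a) \<and> e = R1' ! u)"
proof -
  have eq: "map ((!) R') P = map ((!) R) P" using unchanged by simp
  have "set P \<subseteq> {..<length R'}" using P by (simp add: index_lists_def)
  note guard = map_nth_order_matrix[OF a this, unfolded eq]
  have "step S (q, map ((!) R) P) (\<sigma>, R' ! a) (\<gamma>, e) (q', R1') \<longleftrightarrow>
    (\<exists>m u. (q, \<sigma>, map ((!) (order_matrix R' ! a)) P, m, u, \<gamma>, q') \<in> trans S
       \<and> R1' = upd_regs m (map ((!) R) P) (R' ! a) \<and> e = R1' ! u)"
    unfolding guard using step_srtA_iff[OF S] P by (simp add: index_lists_def)
  also have "\<dots> \<longleftrightarrow> (\<exists>m u. (q, \<sigma>, map ((!) (order_matrix R' ! a)) P, m, u, \<gamma>, q') \<in> trans S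
       \<and> R1' = map ((!) R') (upd_ptrs m P a) \<and> e = R1' ! u)"
  proof (intro ex_cong1 conj_cong refl)
    fix m u
    assume "(q, \<sigma>, map ((!) (order_matrix R' ! a)) P, m, u, \<gamma>, q') \<in> trans S"
    note wf = srtA_transD[OF S this]
    show "R1' = upd_regs m (map ((!) R) P) (R' ! a) \<longleftrightarrow> R1' = map ((!) R') (upd_ptrs m P a)"
      using map_nth_upd_ptrs[OF wf(4) _ unchanged] wf(2) P by (simp add: index_lists_def)
  qed
  finally show ?thesis .
qed

definition new_at :: "nat \<Rightarrow> nat \<Rightarrow> upd list" where
  "new_at K f = map (\<lambda>a. if a = f then New else Old) [0..<K]"

lemma upd_regs_new_at: "length R = K \<Longrightarrow> upd_regs (new_at K f) R d = R[f := d]"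
  by (auto simp: upd_regs_def new_at_def nth_list_update intro!: nth_equalityI)

lemma exists_free_slot:
  assumes "length P1 + length P2 < K"
  obtains f where "f < K" "f \<notin> set P1 \<union> set P2"
proof -
  have "card (set P1 \<union> set P2) < card {..<K}"
    using card_Un_le[of "set P1" "set P2"] card_length[of P1] card_length[of P2] assms by simp
  then have "\<not> {..<K} \<subseteq> set P1 \<union> set P2"
    by (meson card_mono finite_UnI finite_set leD)
  then show ?thesis using that by blast
qed

section \<open>Synchronous product\<close>

definition pool_size :: "('a, 'b, 'd) srt \<Rightarrow> ('e, 'c, 'd) srt \<Rightarrow> nat" where
  "pool_size S1 S2 = Suc (nregs S1 + nregs S2)"

definition prod_state :: "nat \<Rightarrow> nat \<Rightarrow> nat list \<Rightarrow> nat list \<Rightarrow> cmp list list \<Rightarrow> nat" where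
  "prod_state q1 q2 P1 P2 Om = to_nat (q1, q2, P1, P2, Om)"

lemma prod_state_eq_iff [simp]:
  "prod_state q1 q2 P1 P2 Om = prod_state q1' q2' P1' P2' Om' \<longleftrightarrow>
    q1 = q1' \<and> q2 = q2' \<and> P1 = P1' \<and> P2 = P2' \<and> Om = Om'"
  by (simp add: prod_state_def)

text \<open>
  In a product state \<open>prod_state q1 q2 P1 P2 Om\<close>, \<open>Pi\<close> maps the registers of \<open>Si\<close> to
  pool slots and \<open>Om\<close> is the order type of the pool. The input datum is written to the free
  slot \<open>f\<close>, and slot \<open>a\<close> holds the datum read by \<open>S2\<close>.
\<close>

definition prod_trans :: "bool \<Rightarrow> ('a \<Rightarrow> 'b \<Rightarrow> 'e \<Rightarrow> 'c \<Rightarrow> bool) \<Rightarrow> ('b \<Rightarrow> 'c \<Rightarrow> 'z)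
    \<Rightarrow> ('a, 'b, 'd) srt \<Rightarrow> ('e, 'c, 'd) srt
    \<Rightarrow> (nat \<times> 'a \<times> cmp list \<times> upd list \<times> nat \<times> 'z \<times> nat) set" where
  "prod_trans chained sync out S1 S2 =
    {(prod_state q1 q2 P1 P2 Om, \<sigma>, l, new_at (pool_size S1 S2) f,
      if chained then P2' ! u2 else P1' ! u1, out \<gamma> \<gamma>2, prod_state q1' q2' P1' P2' Om')
     | q1 \<sigma> l1 m1 u1 \<gamma> q1' q2 \<sigma>2 l2 m2 u2 \<gamma>2 q2' P1 P2 Om l f P1' a P2' Om'.
       (q1, \<sigma>, l1, m1, u1, \<gamma>, q1') \<in> trans S1 \<and> (q2, \<sigma>2, l2, m2, u2, \<gamma>2, q2') \<in> trans S2
       \<and> sync \<sigma> \<gamma> \<sigma>2 \<gamma>2 \<and> P1 \<in> index_lists (nregs S1) (pool_size S1 S2)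
       \<and> P2 \<in> index_lists (nregs S2) (pool_size S1 S2) \<and> Om \<in> cmp_matrices (pool_size S1 S2)
       \<and> l \<in> cmp_lists (pool_size S1 S2) \<and> f < pool_size S1 S2 \<and> f \<notin> set P1 \<union> set P2
       \<and> Om' = order_update l Om f \<and> P1' = upd_ptrs m1 P1 f
       \<and> a = (if chained then P1' ! u1 else f) \<and> P2' = upd_ptrs m2 P2 a
       \<and> l1 = map ((!) (Om' ! f)) P1 \<and> l2 = map ((!) (Om' ! a)) P2
       \<and> (chained \<or> Om' ! (P1' ! u1) ! (P2' ! u2) = Eq)}"

lemma prod_transI:
  assumes "(q1, \<sigma>, map ((!) (Om' ! f)) P1, m1, u1, \<gamma>, q1') \<in> trans S1"
    and "(q2, \<sigma>2, map ((!) (Om' ! a)) P2, m2, u2, \<gamma>2, q2') \<in> trans S2" and "sync \<sigma> \<gamma> \<sigma>2 \<gamma>2"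
    and "P1 \<in> index_lists (nregs S1) (pool_size S1 S2)"
        "P2 \<in> index_lists (nregs S2) (pool_size S1 S2)"
    and "Om \<in> cmp_matrices (pool_size S1 S2)" "l \<in> cmp_lists (pool_size S1 S2)"
    and "f < pool_size S1 S2" "f \<notin> set P1 \<union> set P2" "Om' = order_update l Om f"
    and "P1' = upd_ptrs m1 P1 f" "a = (if chained then P1' ! u1 else f)" "P2' = upd_ptrs m2 P2 a"
    and "chained \<or> Om' ! (P1' ! u1) ! (P2' ! u2) = Eq"
  shows "(prod_state q1 q2 P1 P2 Om, \<sigma>, l, new_at (pool_size S1 S2) f,
      if chained then P2' ! u2 else P1' ! u1, out \<gamma> \<gamma>2, prod_state q1' q2' P1' P2' Om')
    \<in> prod_trans chained sync out S1 S2"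
  unfolding prod_trans_def mem_Collect_eq
  by (intro exI conjI) (rule refl | rule assms | simp add: assms)+

lemma finite_prod_trans:
  assumes "finite (trans S1)" "finite (trans S2)"
  shows "finite (prod_trans chained sync out S1 S2)"
proof (rule finite_subset)
  let ?K = "pool_size S1 S2"
  let ?D = "trans S1 \<times> trans S2 \<times> index_lists (nregs S1) ?K \<times> index_lists (nregs S2) ?K
    \<times> cmp_matrices ?K \<times> cmp_lists ?K \<times> {..<?K}"
  let ?g = "\<lambda>((q1, \<sigma>, l1, m1, u1, \<gamma>, q1'), (q2, \<sigma>2, l2, m2, u2, \<gamma>2, q2'), P1, P2, Om, l, f).
    let P1' = upd_ptrs m1 P1 f; P2' = upd_ptrs m2 P2 (if chained then P1' ! u1 else f) in
    (prod_state q1 q2 P1 P2 Om, \<sigma>, l, new_at ?K f, if chained then P2' ! u2 else P1' ! u1,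
      out \<gamma> \<gamma>2, prod_state q1' q2' P1' P2' (order_update l Om f))"
  show "prod_trans chained sync out S1 S2 \<subseteq> ?g ` ?D"
  proof
    fix x assume "x \<in> prod_trans chained sync out S1 S2"
    then obtain q1 \<sigma> l1 m1 u1 \<gamma> q1' q2 \<sigma>2 l2 m2 u2 \<gamma>2 q2' P1 P2 Om l f where
      "x = ?g ((q1, \<sigma>, l1, m1, u1, \<gamma>, q1'), (q2, \<sigma>2, l2, m2, u2, \<gamma>2, q2'), P1, P2, Om, l, f)"
      "(q1, \<sigma>, l1, m1, u1, \<gamma>, q1') \<in> trans S1" "(q2, \<sigma>2, l2, m2, u2, \<gamma>2, q2') \<in> trans S2"
      "P1 \<in> index_lists (nregs S1) ?K" "P2 \<in> index_lists (nregs S2) ?K" "Om \<in> cmp_matrices ?K"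
      "l \<in> cmp_lists ?K" "f < ?K"
      unfolding prod_trans_def by (auto simp: Let_def)
    then show "x \<in> ?g ` ?D" by blast
  qed
  show "finite (?g ` ?D)"
    using assms finite_index_lists finite_cmp_matrices finite_cmp_lists by blast
qed

lemma prod_trans_wf:
  assumes S1: "srtA S1" and S2: "srtA S2"
    and t: "(p, \<sigma>, l, m, u, z, p') \<in> prod_trans chained sync out S1 S2"
  shows "length l = pool_size S1 S2 \<and> length m = pool_size S1 S2 \<and> u < pool_size S1 S2
    \<and> set m \<subseteq> {Old, New}"
proof -
  let ?K = "pool_size S1 S2"
  from t obtain q1 \<sigma> l1 m1 u1 \<gamma> q1' q2 \<sigma>2 l2 m2 u2 \<gamma>2 q2' P1 P2 f a where
    t1: "(q1, \<sigma>, l1, m1, u1, \<gamma>, q1') \<in> trans S1" and t2: "(q2, \<sigma>2, l2, m2, u2, \<gamma>2, q2') \<in> trans S2"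
    and P: "P1 \<in> index_lists (nregs S1) ?K" "P2 \<in> index_lists (nregs S2) ?K"
    and f: "f < ?K" and a: "a = (if chained then upd_ptrs m1 P1 f ! u1 else f)"
    and lm: "l \<in> cmp_lists ?K" "m = new_at ?K f"
    and u: "u = (if chained then upd_ptrs m2 P2 a ! u2 else upd_ptrs m1 P1 f ! u1)"
    unfolding prod_trans_def by blast
  note wf1 = srtA_transD[OF S1 t1] and wf2 = srtA_transD[OF S2 t2]
  have "a < ?K" using a f upd_ptrs_nth_less[OF P(1) wf1(2) f wf1(3)] by simp
  then have "u < ?K"
    using u upd_ptrs_nth_less[OF P(1) wf1(2) f wf1(3)] upd_ptrs_nth_less[OF P(2) wf2(2) _ wf2(3)]
    by simp
  then show ?thesis using lm by (auto simp: cmp_lists_def new_at_def)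
qed

definition prod_srt :: "bool \<Rightarrow> ('a \<Rightarrow> 'b \<Rightarrow> 'e \<Rightarrow> 'c \<Rightarrow> bool) \<Rightarrow> ('b \<Rightarrow> 'c \<Rightarrow> 'z)
    \<Rightarrow> ('a, 'b, 'd::{linorder,group_add}) srt \<Rightarrow> ('e, 'c, 'd) srt
    \<Rightarrow> ('a, 'z, 'd) srt" where
  "prod_srt chained sync out S1 S2 =
    (let R0 = reg0 S1 @ reg0 S2 @ [0];
         q0 = prod_state (init S1) (init S2) [0..<nregs S1] [nregs S1..<nregs S1 + nregs S2]
           (order_matrix R0)
     in mk_srt q0 (pool_size S1 S2) R0 (prod_trans chained sync out S1 S2))"

lemma prod_srt_simps [simp]:
  "init (prod_srt chained sync out S1 S2) =
    prod_state (init S1) (init S2) [0..<nregs S1] [nregs S1..<nregs S1 + nregs S2]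
      (order_matrix (reg0 S1 @ reg0 S2 @ [0]))"
  "nregs (prod_srt chained sync out S1 S2) = pool_size S1 S2"
  "reg0 (prod_srt chained sync out S1 S2) = reg0 S1 @ reg0 S2 @ [0]"
  "trans (prod_srt chained sync out S1 S2) = prod_trans chained sync out S1 S2"
  by (simp_all add: prod_srt_def Let_def)

lemma srtA_prod_srt:
  assumes "srtA S1" "srtA S2"
  shows "srtA (prod_srt chained sync out S1 S2)"
  unfolding prod_srt_def Let_def
proof (rule srtA_mk_srt)
  show "finite (prod_trans chained sync out S1 S2)"
    using assms by (intro finite_prod_trans) (simp_all add: srtA_def wf_srt_def)
  show "length (reg0 S1 @ reg0 S2 @ [0]) = pool_size S1 S2"
    using assms by (simp add: srtA_length_reg0 pool_size_def)
qed (rule prod_trans_wf[OF assms])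

definition prod_config ::
    "nat \<Rightarrow> nat \<Rightarrow> nat list \<Rightarrow> nat list \<Rightarrow> 'd::linorder list \<Rightarrow> nat \<times> 'd list" where
  "prod_config q1 q2 P1 P2 R = (prod_state q1 q2 P1 P2 (order_matrix R), R)"

lemma step_prod_srtI:
  fixes S1 :: "('a, 'b, 'd::{linorder,group_add}) srt" and S2 :: "('e, 'c, 'd) srt"
  assumes S1: "srtA S1" and S2: "srtA S2"
    and P: "P1 \<in> index_lists (nregs S1) (pool_size S1 S2)"
        "P2 \<in> index_lists (nregs S2) (pool_size S1 S2)"
    and R: "length R = pool_size S1 S2" and f: "f < pool_size S1 S2" "f \<notin> set P1 \<union> set P2"
    and t1: "(q1, \<sigma>, map ((!) (order_matrix (R[f := d]) ! f)) P1, m1, u1, \<gamma>, q1') \<in> trans S1"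
    and a: "a = (if chained then upd_ptrs m1 P1 f ! u1 else f)"
    and t2: "(q2, \<sigma>2, map ((!) (order_matrix (R[f := d]) ! a)) P2, m2, u2, \<gamma>2, q2') \<in> trans S2"
    and sync: "sync \<sigma> \<gamma> \<sigma>2 \<gamma>2"
    and eq: "chained \<or> R[f := d] ! (upd_ptrs m1 P1 f ! u1) = R[f := d] ! (upd_ptrs m2 P2 a ! u2)"
  shows "step (prod_srt chained sync out S1 S2) (prod_config q1 q2 P1 P2 R) (\<sigma>, d)
      (out \<gamma> \<gamma>2, if chained then R[f := d] ! (upd_ptrs m2 P2 a ! u2)
          else R[f := d] ! (upd_ptrs m1 P1 f ! u1))
      (prod_config q1' q2' (upd_ptrs m1 P1 f) (upd_ptrs m2 P2 a) (R[f := d]))"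
proof -
  let ?K = "pool_size S1 S2" and ?R' = "R[f := d]"
  note wf1 = srtA_transD[OF S1 t1] and wf2 = srtA_transD[OF S2 t2]
  have a_less: "a < ?K" using a f(1) upd_ptrs_nth_less[OF P(1) wf1(2) f(1) wf1(3)] by simp
  have "upd_ptrs m1 P1 f ! u1 < ?K" "upd_ptrs m2 P2 a ! u2 < ?K"
    using upd_ptrs_nth_less[OF P(1) wf1(2) f(1) wf1(3)]
        upd_ptrs_nth_less[OF P(2) wf2(2) a_less wf2(3)] .
  then have "chained \<or> order_matrix ?R' ! (upd_ptrs m1 P1 f ! u1) ! (upd_ptrs m2 P2 a ! u2) = Eq"
    using eq R by simp
  then have "(prod_state q1 q2 P1 P2 (order_matrix R), \<sigma>, map (cmp_of d) R, new_at ?K f,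
      if chained then upd_ptrs m2 P2 a ! u2 else upd_ptrs m1 P1 f ! u1, out \<gamma> \<gamma>2,
      prod_state q1' q2' (upd_ptrs m1 P1 f) (upd_ptrs m2 P2 a) (order_matrix ?R'))
    \<in> prod_trans chained sync out S1 S2"
    using t1 t2 a sync P f order_matrix_in_cmp_matrices[of R] R order_update_order_matrix[of f R d]
    by (intro prod_transI[where Om' = "order_matrix ?R'" and f = f and a = a])
        (simp_all add: cmp_lists_def)
  moreover have lenC: "length R = nregs (prod_srt chained sync out S1 S2)" using R by simp
  ultimately show ?thesis
    unfolding prod_config_def step_srtA_iff[OF srtA_prod_srt[OF S1 S2] lenC]
    by (intro exI[of _ "new_at ?K f"]
        exI[of _ "if chained then upd_ptrs m2 P2 a ! u2 else upd_ptrs m1 P1 f ! u1"])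
      (simp add: upd_regs_new_at[OF R])
qed

lemma step_prod_srtE:
  fixes S1 :: "('a, 'b, 'd::{linorder,group_add}) srt" and S2 :: "('e, 'c, 'd) srt"
  assumes S1: "srtA S1" and S2: "srtA S2"
    and P: "P1 \<in> index_lists (nregs S1) (pool_size S1 S2)"
        "P2 \<in> index_lists (nregs S2) (pool_size S1 S2)"
    and R: "length R = pool_size S1 S2"
    and st: "step (prod_srt chained sync out S1 S2) (prod_config q1 q2 P1 P2 R) (\<sigma>, d) (z, e)
        (p, R')"
  obtains f m1 u1 \<gamma> q1' a \<sigma>2 m2 u2 \<gamma>2 q2' where
    "f < pool_size S1 S2" "f \<notin> set P1 \<union> set P2" "R' = R[f := d]"
    "(q1, \<sigma>, map ((!) (order_matrix R' ! f)) P1, m1, u1, \<gamma>, q1') \<in> trans S1"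
    "a = (if chained then upd_ptrs m1 P1 f ! u1 else f)"
    "(q2, \<sigma>2, map ((!) (order_matrix R' ! a)) P2, m2, u2, \<gamma>2, q2') \<in> trans S2"
    "sync \<sigma> \<gamma> \<sigma>2 \<gamma>2" "chained \<or> R' ! (upd_ptrs m1 P1 f ! u1) = R' ! (upd_ptrs m2 P2 a ! u2)"
    "z = out \<gamma> \<gamma>2" "e = (if chained then R' ! (upd_ptrs m2 P2 a ! u2)
        else R' ! (upd_ptrs m1 P1 f ! u1))"
    "(p, R') = prod_config q1' q2' (upd_ptrs m1 P1 f) (upd_ptrs m2 P2 a) R'"
proof -
  let ?K = "pool_size S1 S2" and ?Om' = "order_update (map (cmp_of d) R) (order_matrix R)"
  have lenC: "length R = nregs (prod_srt chained sync out S1 S2)" using R by simp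
  from st[unfolded prod_config_def step_srtA_iff[OF srtA_prod_srt[OF S1 S2] lenC]]
  obtain m u where "(prod_state q1 q2 P1 P2 (order_matrix R), \<sigma>, map (cmp_of d) R, m, u, z, p)
      \<in> prod_trans chained sync out S1 S2" and R': "R' = upd_regs m R d" and e: "e = R' ! u"
    by auto
  then obtain l1 m1 u1 \<gamma> q1' \<sigma>2 l2 m2 u2 \<gamma>2 q2' f a where
    t1: "(q1, \<sigma>, l1, m1, u1, \<gamma>, q1') \<in> trans S1" and t2: "(q2, \<sigma>2, l2, m2, u2, \<gamma>2, q2') \<in> trans S2"
    and f: "f < ?K" "f \<notin> set P1 \<union> set P2"
    and a: "a = (if chained then upd_ptrs m1 P1 f ! u1 else f)"
    and g: "l1 = map ((!) (?Om' f ! f)) P1" "l2 = map ((!) (?Om' f ! a)) P2"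
    and eq: "chained \<or> ?Om' f ! (upd_ptrs m1 P1 f ! u1) ! (upd_ptrs m2 P2 a ! u2) = Eq"
    and rest: "sync \<sigma> \<gamma> \<sigma>2 \<gamma>2" "m = new_at ?K f" "z = out \<gamma> \<gamma>2"
      "u = (if chained then upd_ptrs m2 P2 a ! u2 else upd_ptrs m1 P1 f ! u1)"
      "p = prod_state q1' q2' (upd_ptrs m1 P1 f) (upd_ptrs m2 P2 a) (?Om' f)"
    unfolding prod_trans_def by auto
  note wf1 = srtA_transD[OF S1 t1] and wf2 = srtA_transD[OF S2 t2]
  have R'_eq: "R' = R[f := d]" using R' rest(2) R upd_regs_new_at by simp
  have Om': "?Om' f = order_matrix R'"
    unfolding R'_eq by (rule order_update_order_matrix) (simp add: R f(1))
  have a_less: "a < ?K" using a f(1) upd_ptrs_nth_less[OF P(1) wf1(2) f(1) wf1(3)] by simp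
  have "upd_ptrs m1 P1 f ! u1 < ?K" "upd_ptrs m2 P2 a ! u2 < ?K"
    using upd_ptrs_nth_less[OF P(1) wf1(2) f(1) wf1(3)]
        upd_ptrs_nth_less[OF P(2) wf2(2) a_less wf2(3)] .
  then have "chained \<or> R' ! (upd_ptrs m1 P1 f ! u1) = R' ! (upd_ptrs m2 P2 a ! u2)"
    using eq R R'_eq by (simp add: Om')
  with that[OF f R'_eq] t1 t2 g a rest e show ?thesis by (simp add: Om' prod_config_def)
qed

lemma step_prod_srt_sound:
  fixes S1 :: "('a, 'b, 'd::{linorder,group_add}) srt" and S2 :: "('e, 'c, 'd) srt"
  assumes S1: "srtA S1" and S2: "srtA S2"
    and P: "P1 \<in> index_lists (nregs S1) (pool_size S1 S2)"
        "P2 \<in> index_lists (nregs S2) (pool_size S1 S2)"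
    and R: "length R = pool_size S1 S2"
    and st: "step (prod_srt chained sync out S1 S2) (prod_config q1 q2 P1 P2 R) (\<sigma>, d) (z, e)
        (p, R')"
  obtains q1' q2' P1' P2' \<gamma> d' \<sigma>2 \<gamma>2 e2 where
    "(p, R') = prod_config q1' q2' P1' P2' R'" "length R' = pool_size S1 S2"
    "P1' \<in> index_lists (nregs S1) (pool_size S1 S2)"
        "P2' \<in> index_lists (nregs S2) (pool_size S1 S2)"
    "step S1 (q1, map ((!) R) P1) (\<sigma>, d) (\<gamma>, d') (q1', map ((!) R') P1')"
    "step S2 (q2, map ((!) R) P2) (\<sigma>2, if chained then d' else d) (\<gamma>2, e2) (q2', map ((!) R') P2')"
    "sync \<sigma> \<gamma> \<sigma>2 \<gamma>2" "z = out \<gamma> \<gamma>2" "e = (if chained then e2 else d')" "chained \<or> d' = e2"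
proof -
  let ?K = "pool_size S1 S2"
  obtain f m1 u1 \<gamma> q1' a \<sigma>2 m2 u2 \<gamma>2 q2' where f: "f < ?K" "f \<notin> set P1 \<union> set P2"
    and R': "R' = R[f := d]"
    and t1: "(q1, \<sigma>, map ((!) (order_matrix R' ! f)) P1, m1, u1, \<gamma>, q1') \<in> trans S1"
    and a: "a = (if chained then upd_ptrs m1 P1 f ! u1 else f)"
    and t2: "(q2, \<sigma>2, map ((!) (order_matrix R' ! a)) P2, m2, u2, \<gamma>2, q2') \<in> trans S2"
    and io: "sync \<sigma> \<gamma> \<sigma>2 \<gamma>2" "chained \<or> R' ! (upd_ptrs m1 P1 f ! u1) = R' ! (upd_ptrs m2 P2 a ! u2)"
      "z = out \<gamma> \<gamma>2" "e = (if chained then R' ! (upd_ptrs m2 P2 a ! u2)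
          else R' ! (upd_ptrs m1 P1 f ! u1))"
    and c': "(p, R') = prod_config q1' q2' (upd_ptrs m1 P1 f) (upd_ptrs m2 P2 a) R'"
    by (rule step_prod_srtE[OF S1 S2 P R st])
  note wf1 = srtA_transD[OF S1 t1] and wf2 = srtA_transD[OF S2 t2]
  have len: "length R' = ?K" using R R' by simp
  have unchanged: "\<forall>x \<in> set P1. R' ! x = R ! x" "\<forall>x \<in> set P2. R' ! x = R ! x"
    using f(2) unfolding R' by (metis UnCI nth_list_update_neq)+
  have a_less: "a < ?K" using a f(1) upd_ptrs_nth_less[OF P(1) wf1(2) f(1) wf1(3)] by simp
  have P': "upd_ptrs m1 P1 f \<in> index_lists (nregs S1) ?K"
      "upd_ptrs m2 P2 a \<in> index_lists (nregs S2) ?K"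
    using upd_ptrs_in_index_lists P wf1(2) wf2(2) f(1) a_less by blast+
  have Rfa: "R' ! f = d" "R' ! a = (if chained then R' ! (upd_ptrs m1 P1 f ! u1) else d)"
    using f(1) R by (simp_all add: R' a)
  have "step S1 (q1, map ((!) R) P1) (\<sigma>, R' ! f) (\<gamma>, R' ! (upd_ptrs m1 P1 f ! u1))
      (q1', map ((!) R') (upd_ptrs m1 P1 f))"
    unfolding step_pointers_iff[OF S1 P(1)[folded len] f(1)[folded len] unchanged(1)]
    using t1 wf1(3) P'(1) by (intro exI[of _ m1] exI[of _ u1]) (simp add: index_lists_length)
  moreover have "step S2 (q2, map ((!) R) P2) (\<sigma>2, R' ! a) (\<gamma>2, R' ! (upd_ptrs m2 P2 a ! u2))
      (q2', map ((!) R') (upd_ptrs m2 P2 a))"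
    unfolding step_pointers_iff[OF S2 P(2)[folded len] a_less[folded len] unchanged(2)]
    using t2 wf2(3) P'(2) by (intro exI[of _ m2] exI[of _ u2]) (simp add: index_lists_length)
  ultimately show ?thesis using that[OF c' len P'] Rfa io by simp
qed

lemma step_prod_srt_complete:
  fixes S1 :: "('a, 'b, 'd::{linorder,group_add}) srt" and S2 :: "('e, 'c, 'd) srt"
  assumes S1: "srtA S1" and S2: "srtA S2"
    and P: "P1 \<in> index_lists (nregs S1) (pool_size S1 S2)"
        "P2 \<in> index_lists (nregs S2) (pool_size S1 S2)"
    and R: "length R = pool_size S1 S2"
    and st1: "step S1 (q1, map ((!) R) P1) (\<sigma>, d) (\<gamma>, d') (q1', R1')"
    and st2: "step S2 (q2, map ((!) R) P2) (\<sigma>2, if chained then d' else d) (\<gamma>2, e2) (q2', R2')"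
    and sync: "sync \<sigma> \<gamma> \<sigma>2 \<gamma>2" and eq: "chained \<or> d' = e2"
  obtains P1' P2' R' where
    "step (prod_srt chained sync out S1 S2) (prod_config q1 q2 P1 P2 R) (\<sigma>, d)
      (out \<gamma> \<gamma>2, if chained then e2 else d') (prod_config q1' q2' P1' P2' R')"
    "length R' = pool_size S1 S2" "P1' \<in> index_lists (nregs S1) (pool_size S1 S2)"
    "P2' \<in> index_lists (nregs S2) (pool_size S1 S2)" "R1' = map ((!) R') P1'"
        "R2' = map ((!) R') P2'"
proof -
  let ?K = "pool_size S1 S2"
  obtain f where f: "f < ?K" "f \<notin> set P1 \<union> set P2"
    using exists_free_slot[of P1 P2 ?K] P by (auto simp: index_lists_def pool_size_def)
  define R' where "R' = R[f := d]"
  have len: "length R' = ?K" and Rf: "R' ! f = d" using R f(1) by (simp_all add: R'_def)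
  have unchanged: "\<forall>x \<in> set P1. R' ! x = R ! x" "\<forall>x \<in> set P2. R' ! x = R ! x"
    using f(2) unfolding R'_def by (metis UnCI nth_list_update_neq)+
  from st1[folded Rf] obtain m1 u1 where t1:
      "(q1, \<sigma>, map ((!) (order_matrix R' ! f)) P1, m1, u1, \<gamma>, q1') \<in> trans S1"
    and R1': "R1' = map ((!) R') (upd_ptrs m1 P1 f)" and d': "d' = R1' ! u1"
    unfolding step_pointers_iff[OF S1 P(1)[folded len] f(1)[folded len] unchanged(1)] by blast
  note wf1 = srtA_transD[OF S1 t1]
  define a where "a = (if chained then upd_ptrs m1 P1 f ! u1 else f)"
  have P1': "upd_ptrs m1 P1 f \<in> index_lists (nregs S1) ?K"
    by (rule upd_ptrs_in_index_lists[OF P(1) wf1(2) f(1)])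
  have a_less: "a < ?K" using a_def f(1) upd_ptrs_nth_less[OF P(1) wf1(2) f(1) wf1(3)] by simp
  have "R' ! a = (if chained then d' else d)"
    using P1' wf1(3) by (simp add: a_def Rf d' R1' index_lists_length)
  from st2[folded this] obtain m2 u2 where t2:
      "(q2, \<sigma>2, map ((!) (order_matrix R' ! a)) P2, m2, u2, \<gamma>2, q2') \<in> trans S2"
    and R2': "R2' = map ((!) R') (upd_ptrs m2 P2 a)" and e2: "e2 = R2' ! u2"
    unfolding step_pointers_iff[OF S2 P(2)[folded len] a_less[folded len] unchanged(2)] by blast
  note wf2 = srtA_transD[OF S2 t2]
  have P2': "upd_ptrs m2 P2 a \<in> index_lists (nregs S2) ?K"
    by (rule upd_ptrs_in_index_lists[OF P(2) wf2(2) a_less])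
  have d'e2: "d' = R' ! (upd_ptrs m1 P1 f ! u1)" "e2 = R' ! (upd_ptrs m2 P2 a ! u2)"
    using P1' P2' wf1(3) wf2(3) by (simp_all add: d' e2 R1' R2' index_lists_length)
  have "step (prod_srt chained sync out S1 S2) (prod_config q1 q2 P1 P2 R) (\<sigma>, d)
      (out \<gamma> \<gamma>2, if chained then e2 else d')
          (prod_config q1' q2' (upd_ptrs m1 P1 f) (upd_ptrs m2 P2 a) R')"
    unfolding d'e2 R'_def using eq[unfolded d'e2 R'_def]
    by (rule step_prod_srtI[where sync = sync and out = out,
          OF S1 S2 P R f t1[unfolded R'_def] a_def t2[unfolded R'_def] sync])
  then show ?thesis using that P1' P2' len R1' R2' by blast
qed

inductive prod_io :: "bool \<Rightarrow> ('a \<Rightarrow> 'b \<Rightarrow> 'e \<Rightarrow> 'c \<Rightarrow> bool) \<Rightarrow> ('b \<Rightarrow> 'c \<Rightarrow> 'z)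
    \<Rightarrow> ('a \<times> 'd) list \<Rightarrow> ('b \<times> 'd) list \<Rightarrow> ('e \<times> 'd) list \<Rightarrow> ('c \<times> 'd) list
    \<Rightarrow> ('z \<times> 'd) list \<Rightarrow> bool"
  for chained sync out where
  prod_io_Nil: "prod_io chained sync out [] [] [] [] []"
| prod_io_Cons: "sync \<sigma> \<gamma> \<sigma>2 \<gamma>2 \<Longrightarrow> chained \<or> d' = e2 \<Longrightarrow>
    prod_io chained sync out s t1 s2 t2 t \<Longrightarrow>
    prod_io chained sync out ((\<sigma>, d) # s) ((\<gamma>, d') # t1) ((\<sigma>2, if chained then d' else d) # s2)
      ((\<gamma>2, e2) # t2) ((out \<gamma> \<gamma>2, if chained then e2 else d') # t)"

lemma runs_prod_srt_sound:
  fixes S1 :: "('a, 'b, 'd::{linorder,group_add}) srt" and S2 :: "('e, 'c, 'd) srt"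
  assumes S1: "srtA S1" and S2: "srtA S2"
  shows "runs (prod_srt chained sync out S1 S2) (prod_config q1 q2 P1 P2 R) s t \<Longrightarrow>
    P1 \<in> index_lists (nregs S1) (pool_size S1 S2) \<Longrightarrow> P2 \<in> index_lists (nregs S2) (pool_size S1 S2) \<Longrightarrow>
    length R = pool_size S1 S2 \<Longrightarrow>
    \<exists>t1 s2 t2. runs S1 (q1, map ((!) R) P1) s t1 \<and> runs S2 (q2, map ((!) R) P2) s2 t2
      \<and> prod_io chained sync out s t1 s2 t2 t"
proof (induction s arbitrary: q1 q2 P1 P2 R t)
  case Nil
  then show ?case by (intro exI[of _ "[]"]) (simp add: prod_io_Nil)
next
  case (Cons x s)
  obtain \<sigma> d where x: "x = (\<sigma>, d)" by fastforce
  from Cons.prems(1) obtain z e t' p R' where t: "t = (z, e) # t'"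
    and st: "step (prod_srt chained sync out S1 S2) (prod_config q1 q2 P1 P2 R) (\<sigma>, d) (z, e)
        (p, R')"
    and r: "runs (prod_srt chained sync out S1 S2) (p, R') s t'"
    by (auto simp: runs_Cons x)
  obtain q1' q2' P1' P2' \<gamma> d' \<sigma>2 \<gamma>2 e2 where c': "(p, R') = prod_config q1' q2' P1' P2' R'"
    and len: "length R' = pool_size S1 S2" and P': "P1' \<in> index_lists (nregs S1) (pool_size S1 S2)"
      "P2' \<in> index_lists (nregs S2) (pool_size S1 S2)"
    and st1: "step S1 (q1, map ((!) R) P1) (\<sigma>, d) (\<gamma>, d') (q1', map ((!) R') P1')"
    and st2: "step S2 (q2, map ((!) R) P2) (\<sigma>2, if chained then d' else d) (\<gamma>2, e2)
        (q2', map ((!) R') P2')"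
    and io: "sync \<sigma> \<gamma> \<sigma>2 \<gamma>2" "z = out \<gamma> \<gamma>2" "e = (if chained then e2 else d')" "chained \<or> d' = e2"
    by (rule step_prod_srt_sound[OF S1 S2 Cons.prems(2-4) st])
  from Cons.IH[OF r[unfolded c'] P' len] obtain t1 s2 t2 where r1:
      "runs S1 (q1', map ((!) R') P1') s t1"
    and r2: "runs S2 (q2', map ((!) R') P2') s2 t2" and rio:
        "prod_io chained sync out s t1 s2 t2 t'"
    by blast
  have "prod_io chained sync out (x # s) ((\<gamma>, d') # t1) ((\<sigma>2, if chained then d' else d) # s2)
      ((\<gamma>2, e2) # t2) t"
    unfolding x t io(2,3) by (rule prod_io_Cons[OF io(1,4) rio])
  moreover have "runs S1 (q1, map ((!) R) P1) (x # s) ((\<gamma>, d') # t1)"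
    using st1 r1 unfolding x runs_Cons by blast
  moreover have "runs S2 (q2, map ((!) R) P2) ((\<sigma>2, if chained then d' else d) # s2)
      ((\<gamma>2, e2) # t2)"
    using st2 r2 unfolding runs_Cons by blast
  ultimately show ?case by blast
qed

lemma runs_prod_srt_complete:
  fixes S1 :: "('a, 'b, 'd::{linorder,group_add}) srt" and S2 :: "('e, 'c, 'd) srt"
  assumes S1: "srtA S1" and S2: "srtA S2"
  shows "prod_io chained sync out s t1 s2 t2 t \<Longrightarrow>
    runs S1 (q1, map ((!) R) P1) s t1 \<Longrightarrow> runs S2 (q2, map ((!) R) P2) s2 t2 \<Longrightarrow>
    P1 \<in> index_lists (nregs S1) (pool_size S1 S2) \<Longrightarrow> P2 \<in> index_lists (nregs S2) (pool_size S1 S2) \<Longrightarrow>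
    length R = pool_size S1 S2 \<Longrightarrow> runs (prod_srt chained sync out S1 S2)
        (prod_config q1 q2 P1 P2 R) s t"
proof (induction arbitrary: q1 q2 P1 P2 R rule: prod_io.induct)
  case (prod_io_Cons \<sigma> \<gamma> \<sigma>2 \<gamma>2 d' e2 s t1 s2 t2 t d)
  from prod_io_Cons.prems(1) obtain q1' R1' where st1:
      "step S1 (q1, map ((!) R) P1) (\<sigma>, d) (\<gamma>, d') (q1', R1')"
    and r1: "runs S1 (q1', R1') s t1"
    by (auto simp: runs_Cons)
  from prod_io_Cons.prems(2) obtain q2' R2' where
    st2: "step S2 (q2, map ((!) R) P2) (\<sigma>2, if chained then d' else d) (\<gamma>2, e2) (q2', R2')"
    and r2: "runs S2 (q2', R2') s2 t2"
    by (auto simp: runs_Cons)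
  obtain P1' P2' R' where st: "step (prod_srt chained sync out S1 S2) (prod_config q1 q2 P1 P2 R)
      (\<sigma>, d)
      (out \<gamma> \<gamma>2, if chained then e2 else d') (prod_config q1' q2' P1' P2' R')"
    and "length R' = pool_size S1 S2" "P1' \<in> index_lists (nregs S1) (pool_size S1 S2)"
      "P2' \<in> index_lists (nregs S2) (pool_size S1 S2)" "R1' = map ((!) R') P1'"
          "R2' = map ((!) R') P2'"
    by (rule step_prod_srt_complete[where sync = sync and out = out,
          OF S1 S2 prod_io_Cons.prems(3-5) st1 st2 prod_io_Cons.hyps(1,2)])
  with prod_io_Cons.IH r1 r2
  have "runs (prod_srt chained sync out S1 S2) (prod_config q1' q2' P1' P2' R') s t" by simp
  with st show ?case unfolding runs_Cons by blast
qed simp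

lemma runs_prod_srt_iff:
  fixes S1 :: "('a, 'b, 'd::{linorder,group_add}) srt" and S2 :: "('e, 'c, 'd) srt"
  assumes S1: "srtA S1" and S2: "srtA S2"
  shows "runs (prod_srt chained sync out S1 S2)
      (init (prod_srt chained sync out S1 S2), reg0 (prod_srt chained sync out S1 S2)) s t \<longleftrightarrow>
    (\<exists>t1 s2 t2. runs S1 (init S1, reg0 S1) s t1 \<and> runs S2 (init S2, reg0 S2) s2 t2
      \<and> prod_io chained sync out s t1 s2 t2 t)"
proof -
  let ?R = "reg0 S1 @ reg0 S2 @ [0]"
    and ?P1 = "[0..<nregs S1]" and ?P2 = "[nregs S1..<nregs S1 + nregs S2]"
  have init: "(init (prod_srt chained sync out S1 S2), reg0 (prod_srt chained sync out S1 S2))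
      = prod_config (init S1) (init S2) ?P1 ?P2 ?R"
    by (simp add: prod_config_def)
  have P: "?P1 \<in> index_lists (nregs S1) (pool_size S1 S2)"
      "?P2 \<in> index_lists (nregs S2) (pool_size S1 S2)"
    and R: "length ?R = pool_size S1 S2"
    using S1 S2 by (auto simp: index_lists_def pool_size_def srtA_length_reg0)
  have "map ((!) ?R) ?P1 = reg0 S1" "map ((!) ?R) ?P2 = reg0 S2"
    using S1 S2 by (auto simp: srtA_length_reg0 nth_append intro!: nth_equalityI)
  then show ?thesis
    unfolding init using runs_prod_srt_sound[OF S1 S2 _ P R]
        runs_prod_srt_complete[OF S1 S2 _ _ _ P R] by metis
qed

lemma prod_io_Int_iff:
  "prod_io False (\<lambda>\<sigma> \<gamma> \<sigma>2 \<gamma>2. \<sigma>2 = \<sigma> \<and> \<gamma>2 = \<gamma>) (\<lambda>\<gamma> \<gamma>2. \<gamma>) s t1 s2 t2 t \<longleftrightarrow>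
    s2 = s \<and> t1 = t \<and> t2 = t \<and> length s = length t"
proof -
  have "length s = length t \<Longrightarrow>
      prod_io False (\<lambda>\<sigma> \<gamma> \<sigma>2 \<gamma>2. \<sigma>2 = \<sigma> \<and> \<gamma>2 = \<gamma>) (\<lambda>\<gamma> \<gamma>2. \<gamma>) s t s t t"
  proof (induction s t rule: list_induct2)
    case (Cons x s y t)
    obtain \<sigma> d \<gamma> d' where xy: "x = (\<sigma>, d)" "y = (\<gamma>, d')" by fastforce
    have "prod_io False (\<lambda>\<sigma> \<gamma> \<sigma>2 \<gamma>2. \<sigma>2 = \<sigma> \<and> \<gamma>2 = \<gamma>) (\<lambda>\<gamma> \<gamma>2. \<gamma>) ((\<sigma>, d) # s) ((\<gamma>, d') # t)
        ((\<sigma>, if False then d' else d) # s) ((\<gamma>, d') # t)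
            (((\<lambda>\<gamma> \<gamma>2. \<gamma>) \<gamma> \<gamma>, if False then d' else d') # t)"
      by (rule prod_io_Cons) (simp_all add: Cons.IH)
    then show ?case by (simp add: xy)
  qed (rule prod_io_Nil)
  moreover have "prod_io False (\<lambda>\<sigma> \<gamma> \<sigma>2 \<gamma>2. \<sigma>2 = \<sigma> \<and> \<gamma>2 = \<gamma>) (\<lambda>\<gamma> \<gamma>2. \<gamma>) s t1 s2 t2 t \<Longrightarrow>
      s2 = s \<and> t1 = t \<and> t2 = t \<and> length s = length t"
    by (induction rule: prod_io.induct) auto
  ultimately show ?thesis by auto
qed

lemma prod_io_comp_iff:
  "prod_io True (\<lambda>\<sigma> \<gamma> \<sigma>2 \<theta>. \<sigma>2 = \<gamma>) (\<lambda>\<gamma> \<theta>. \<theta>) s t1 s2 t2 t \<longleftrightarrow>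
    s2 = t1 \<and> t2 = t \<and> length s = length t1 \<and> length t1 = length t"
proof -
  have "length s = length t1 \<Longrightarrow> length t1 = length t \<Longrightarrow>
      prod_io True (\<lambda>\<sigma> \<gamma> \<sigma>2 \<theta>. \<sigma>2 = \<gamma>) (\<lambda>\<gamma> \<theta>. \<theta>) s t1 t1 t t"
  proof (induction s t1 t rule: list_induct3)
    case (Cons x s y u z t)
    obtain \<sigma> d \<gamma> d' \<theta> e where xyz: "x = (\<sigma>, d)" "y = (\<gamma>, d')" "z = (\<theta>, e)" by fastforce
    have "prod_io True (\<lambda>\<sigma> \<gamma> \<sigma>2 \<theta>. \<sigma>2 = \<gamma>) (\<lambda>\<gamma> \<theta>. \<theta>) ((\<sigma>, d) # s) ((\<gamma>, d') # u)
        ((\<gamma>, if True then d' else d) # u) ((\<theta>, e) # t)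
            (((\<lambda>\<gamma> \<theta>. \<theta>) \<gamma> \<theta>, if True then e else d') # t)"
      by (rule prod_io_Cons) (simp_all add: Cons.IH)
    then show ?case by (simp add: xyz)
  qed (rule prod_io_Nil)
  moreover have "prod_io True (\<lambda>\<sigma> \<gamma> \<sigma>2 \<theta>. \<sigma>2 = \<gamma>) (\<lambda>\<gamma> \<theta>. \<theta>) s t1 s2 t2 t \<Longrightarrow>
      s2 = t1 \<and> t2 = t \<and> length s = length t1 \<and> length t1 = length t"
    by (induction rule: prod_io.induct) auto
  ultimately show ?thesis by auto
qed

definition inter_srt :: "('a, 'b, 'd::{linorder,group_add}) srt \<Rightarrow> ('a, 'b, 'd) srt
    \<Rightarrow> ('a, 'b, 'd) srt" where
  "inter_srt = prod_srt False (\<lambda>\<sigma> \<gamma> \<sigma>2 \<gamma>2. \<sigma>2 = \<sigma> \<and> \<gamma>2 = \<gamma>) (\<lambda>\<gamma> \<gamma>2. \<gamma>)"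

definition comp_srt :: "('a, 'b, 'd::{linorder,group_add}) srt \<Rightarrow> ('b, 'c, 'd) srt
    \<Rightarrow> ('a, 'c, 'd) srt" where
  "comp_srt = prod_srt True (\<lambda>\<sigma> \<gamma> \<sigma>2 \<theta>. \<sigma>2 = \<gamma>) (\<lambda>\<gamma> \<theta>. \<theta>)"

lemma srtA_inter_srt: "srtA S1 \<Longrightarrow> srtA S2 \<Longrightarrow> srtA (inter_srt S1 S2)"
  unfolding inter_srt_def by (rule srtA_prod_srt)

lemma srtA_comp_srt: "srtA S1 \<Longrightarrow> srtA S2 \<Longrightarrow> srtA (comp_srt S1 S2)"
  unfolding comp_srt_def by (rule srtA_prod_srt)

lemma sem_union_srt:
  assumes "srtA S1" "srtA S2"
  shows "sem (union_srt S1 S2) = sem S1 \<union> sem S2"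
  by (rule set_eqI) (simp add: mem_sem_iff runs_union_srt_iff[OF assms])

lemma sem_inter_srt:
  assumes "srtA S1" "srtA S2"
  shows "sem (inter_srt S1 S2) = sem S1 \<inter> sem S2"
proof (rule set_eqI)
  fix w
  show "w \<in> sem (inter_srt S1 S2) \<longleftrightarrow> w \<in> sem S1 \<inter> sem S2"
    unfolding inter_srt_def mem_sem_iff Int_iff runs_prod_srt_iff[OF assms] prod_io_Int_iff
    using runs_length by blast
qed

lemma sem_comp_srt:
  assumes "srtA S1" "srtA S2"
  shows "sem (comp_srt S1 S2) = comp_tr (sem S1) (sem S2)"
proof (rule set_eqI)
  fix w
  show "w \<in> sem (comp_srt S1 S2) \<longleftrightarrow> w \<in> comp_tr (sem S1) (sem S2)"
    unfolding comp_srt_def mem_sem_iff mem_comp_tr_sem_iff runs_prod_srt_iff[OF assms]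
        prod_io_comp_iff
    by (blast dest: runs_length)
qed

theorem theorem3p19:
  assumes "infinite (UNIV :: 'd::{linorder,group_add} set)"
  shows "(\<forall>(S1::('a::finite, 'b::finite, 'd) srt) S2. srtA S1 \<and> srtA S2 \<longrightarrow>
            (\<exists>S::('a, 'b, 'd) srt. srtA S \<and> sem S = sem S1 \<union> sem S2) \<and>
            (\<exists>S::('a, 'b, 'd) srt. srtA S \<and> sem S = sem S1 \<inter> sem S2))
       \<and> (\<forall>(S1::('a, 'b, 'd) srt) (S2::('b, 'c::finite, 'd) srt). srtA S1 \<and> srtA S2 \<longrightarrow>
            (\<exists>S::('a, 'c, 'd) srt. srtA S \<and> sem S = comp_tr (sem S1) (sem S2)))"
proof (intro conjI allI impI)
  fix S1 S2 :: "('a, 'b, 'd) srt"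
  assume "srtA S1 \<and> srtA S2"
  then show "\<exists>S. srtA S \<and> sem S = sem S1 \<union> sem S2" "\<exists>S. srtA S \<and> sem S = sem S1 \<inter> sem S2"
    using srtA_union_srt[of S1 S2] sem_union_srt[of S1 S2] srtA_inter_srt[of S1 S2]
        sem_inter_srt[of S1 S2]
    by blast+
next
  fix S1 :: "('a, 'b, 'd) srt" and S2 :: "('b, 'c, 'd) srt"
  assume "srtA S1 \<and> srtA S2"
  then show "\<exists>S. srtA S \<and> sem S = comp_tr (sem S1) (sem S2)"
    using srtA_comp_srt[of S1 S2] sem_comp_srt[of S1 S2] by blast
qed

end
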